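(* Let $\alpha_1\le\dots\le\alpha_r$ and $\beta_1\le\dots\le\beta_{r+1}$ be positive real numbers such that $\alpha_i\ge\beta_{i+1}$ for $i=1,\dots,r$ and $\sum_{i=1}^r\alpha_i=\sum_{i=1}^{r+1}\beta_i$. Then $\sum_{i=1}^{r+1}\beta_i^2\le\sum_{i=1}^r\alpha_i^2$, with equality if and only if $\alpha_i=\beta_{i+1}$ for all $i=1,\dots,r$. *)

theory Defs
  imports Main "HOL.Real"
begin

end

theory Submission
  imports Defs
begin

(* Splitting off b 1 from \<Sum> b i, the hypothesis on the sums says that the gaps
   a i - b (i+1) \<ge> 0 add up to b 1, and since a i + b (i+1) \<ge> 2 b 1, factoring
   a i\<^sup>2 - b (i+1)\<^sup>2 gives \<Sum> a i\<^sup>2 - \<Sum> b (i+1)\<^sup>2 \<ge> 2 (b 1)\<^sup>2, i.e.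
   \<Sum> a i\<^sup>2 - \<Sum> b i\<^sup>2 \<ge> (b 1)\<^sup>2 > 0. So the inequality is always strict, and the
   stated equality condition fails too, because the gaps sum to b 1 > 0; both sides of
   the equivalence are false. *)

lemma sum_atLeast1_atMost_Suc:
  fixes f :: "nat \<Rightarrow> 'a::comm_monoid_add"
  shows "(\<Sum>i=1..n+1. f i) = f 1 + (\<Sum>i=1..n. f (i + 1))"
  using sum.atLeast_Suc_atMost[of 1 "n+1" f] sum.shift_bounds_cl_nat_ivl[of f 1 1 n] by simp

lemma sum_squares_diff_ge:
  fixes x y :: "'a \<Rightarrow> 'b::linordered_idom"
  assumes "\<And>i. i \<in> A \<Longrightarrow> c \<le> y i" and "\<And>i. i \<in> A \<Longrightarrow> y i \<le> x i"
  shows "2 * c * (\<Sum>i\<in>A. x i - y i) \<le> (\<Sum>i\<in>A. (x i)\<^sup>2) - (\<Sum>i\<in>A. (y i)\<^sup>2)"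
proof -
  have "2 * c * (\<Sum>i\<in>A. x i - y i) = (\<Sum>i\<in>A. (x i - y i) * (2 * c))"
    by (simp add: sum_distrib_left mult.commute)
  also have "\<dots> \<le> (\<Sum>i\<in>A. (x i - y i) * (x i + y i))"
  proof (rule sum_mono)
    fix i assume "i \<in> A"
    with assms have c_le: "c \<le> y i" and y_le: "y i \<le> x i" by auto
    then have "2 * c \<le> x i + y i"
      unfolding mult_2 by (intro add_mono order_trans[OF c_le y_le])
    with y_le show "(x i - y i) * (2 * c) \<le> (x i - y i) * (x i + y i)"
      by (intro mult_left_mono) simp_all
  qed
  also have "\<dots> = (\<Sum>i\<in>A. (x i)\<^sup>2) - (\<Sum>i\<in>A. (y i)\<^sup>2)"
    by (simp add: power2_eq_square algebra_simps flip: sum_subtractf)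
  finally show ?thesis .
qed

theorem lemma2p5:
  fixes r :: nat and a b :: "nat \<Rightarrow> real"
  assumes a_pos: "\<And>i. 1 \<le> i \<Longrightarrow> i \<le> r \<Longrightarrow> a i > 0"
    and b_pos: "\<And>i. 1 \<le> i \<Longrightarrow> i \<le> r + 1 \<Longrightarrow> b i > 0"
    and a_mono: "\<And>i. 1 \<le> i \<Longrightarrow> i < r \<Longrightarrow> a i \<le> a (i + 1)"
    and b_mono: "\<And>i. 1 \<le> i \<Longrightarrow> i < r + 1 \<Longrightarrow> b i \<le> b (i + 1)"
    and interlace: "\<And>i. 1 \<le> i \<Longrightarrow> i \<le> r \<Longrightarrow> a i \<ge> b (i + 1)"
    and sum_eq: "(\<Sum>i=1..r. a i) = (\<Sum>i=1..r+1. b i)"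
  shows "(\<Sum>i=1..r+1. (b i)^2) \<le> (\<Sum>i=1..r. (a i)^2)
    \<and> ((\<Sum>i=1..r+1. (b i)^2) = (\<Sum>i=1..r. (a i)^2)
         \<longleftrightarrow> (\<forall>i. 1 \<le> i \<and> i \<le> r \<longrightarrow> a i = b (i + 1)))"
proof -
  have b1_pos: "b 1 > 0"
    using b_pos[of 1] by simp
  have gaps_sum: "(\<Sum>i=1..r. a i - b (i + 1)) = b 1"
    using sum_eq sum_atLeast1_atMost_Suc[of b r] by (simp add: sum_subtractf)
  have b1_le: "b 1 \<le> b (i + 1)" if "i \<in> {1..r}" for i
  proof (rule lift_Suc_mono_le_ivl[where N = "{1..r}"])
    show "\<And>n. n \<in> {1..r} \<Longrightarrow> b n \<le> b (Suc n)"
      using b_mono by simp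
    show "1 \<le> i + 1" "{1..<i + 1} \<subseteq> {1..r}"
      using that by auto
  qed
  have "2 * (b 1)\<^sup>2 \<le> (\<Sum>i=1..r. (a i)\<^sup>2) - (\<Sum>i=1..r. (b (i + 1))\<^sup>2)"
    using sum_squares_diff_ge[of "{1..r}" "b 1" "\<lambda>i. b (i + 1)" a] b1_le interlace gaps_sum
    by (simp add: power2_eq_square)
  moreover have "(\<Sum>i=1..r+1. (b i)\<^sup>2) = (b 1)\<^sup>2 + (\<Sum>i=1..r. (b (i + 1))\<^sup>2)"
    by (rule sum_atLeast1_atMost_Suc)
  moreover have "(b 1)\<^sup>2 > 0"
    using b1_pos by simp
  ultimately have strict: "(\<Sum>i=1..r+1. (b i)\<^sup>2) < (\<Sum>i=1..r. (a i)\<^sup>2)"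
    by linarith
  have "\<not> (\<forall>i. 1 \<le> i \<and> i \<le> r \<longrightarrow> a i = b (i + 1))"
  proof
    assume "\<forall>i. 1 \<le> i \<and> i \<le> r \<longrightarrow> a i = b (i + 1)"
    then have "(\<Sum>i=1..r. a i - b (i + 1)) = 0"
      by simp
    with gaps_sum b1_pos show False
      by simp
  qed
  with strict show ?thesis
    by simp
qed

end
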